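(* Let $h\ge 2$ be an integer and let $(X_h,c)$ be the pseudometric space described in the context, with $n=|X_h|$ points. Then: (i) $n \le (h+1)!^3$; (ii) there is an execution of the Reverse Greedy algorithm on $X_h$ (with a suitable tie-breaking) whose final set $R_1$ consists of a single point of the cluster of the root $\rho$; (iii) $\mathrm{cost}(\{\mu\}) < (h+1)!^3$ and $\mathrm{cost}(\{\rho\}) \ge (h-1)(h+1)!^3/8$. Consequently $\mathrm{cost}(R_1)/\min_{x\in X_h}\mathrm{cost}(\{x\}) \ge (h-1)/8$.
   Context: For $x\in X$ and nonempty $F\subseteq X$, $c_{xF}=\min_{f\in F}c_{xf}$, and $\mathrm{cost}(F)=\sum_{x\in X} c_{xF}$. The Reverse Greedy algorithm: set $R_n = X$; for $t = n,\dots,2$, set $R_{t-1} = R_t\setminus\{r_t\}$ where $r_t\in R_t$ minimizes $\mathrm{cost}(R_{t-1})$ (ties broken arbitrarily). Construction of $X_h$: let $T$ be a rooted tree with levels $1,\dots,h$, root $\rho$ at level $h$, leaves at level $1$, in which every node at level $j>1$ has exactly $(j+1)^3$ children (all at level $j-1$). Let $\hat T$ be the graph obtained from $T$ by adding a new node $\mu$ adjacent to every leaf of $T$; all edges have length $1$. The space $X_h$ is obtained by replacing each node $x$ of $T$ at level $j$ by a cluster of $w_j = (j!)^3$ points (one of which is identified with $x$), and $\mu$ by a single point; two points in the same cluster are at distance $0$, and two points in different clusters are at distance equal to the shortest-path distance in $\hat T$ between the corresponding nodes. (Thus distinct points may be at distance $0$, i.e. $c$ is a pseudometric.) $\mathrm{cost}(\{\rho\})$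 and $\mathrm{cost}(\{\mu\})$ denote the costs of a single facility at (a point of the cluster of) $\rho$ and at $\mu$ respectively. *)

theory Defs
  imports Complex_Main
begin

definition dist_set :: "('a \<Rightarrow> 'a \<Rightarrow> real) \<Rightarrow> 'a \<Rightarrow> 'a set \<Rightarrow> real" where
  "dist_set c x F = Min ((\<lambda>f. c x f) ` F)"

definition cost :: "'a set \<Rightarrow> ('a \<Rightarrow> 'a \<Rightarrow> real) \<Rightarrow> 'a set \<Rightarrow> real" where
  "cost X c F = (\<Sum>x\<in>X. dist_set c x F)"

definition reverse_greedy_run :: "'a set \<Rightarrow> ('a \<Rightarrow> 'a \<Rightarrow> real) \<Rightarrow> (nat \<Rightarrow> 'a set) \<Rightarrow> bool" where
  "reverse_greedy_run X c R \<longleftrightarrow>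
     R (card X) = X \<and>
     (\<forall>t. 2 \<le> t \<and> t \<le> card X \<longrightarrow>
        (\<exists>r\<in>R t. R (t - 1) = R t - {r} \<and>
           (\<forall>r'\<in>R t. cost X c (R t - {r}) \<le> cost X c (R t - {r'}))))"

text \<open>Vertices of the graph T-hat: \<open>Some p\<close> is the node of the tree T reached from the root
  by the path p of child indices (root = \<open>Some []\<close>); \<open>None\<close> is the extra node mu. A node at level j > 1 has
  (j+1)^3 children, so the i-th entry (0-indexed) of a path, which selects a child of
  a node at level h - i, is < (h - i + 1)^3.\<close>

type_synonym vertex = "nat list option"

definition valid_path :: "nat \<Rightarrow> nat list \<Rightarrow> bool" where
  "valid_path h p \<longleftrightarrow> length p \<le> h - 1 \<and> (\<forall>i<length p. p ! i < (h - i + 1) ^ 3)"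

definition tree_nodes :: "nat \<Rightarrow> vertex set" where
  "tree_nodes h = {Some p | p. valid_path h p}"

definition level :: "nat \<Rightarrow> nat list \<Rightarrow> nat" where
  "level h p = h - length p"

definition hat_adj :: "nat \<Rightarrow> vertex \<Rightarrow> vertex \<Rightarrow> bool" where
  "hat_adj h u v \<longleftrightarrow>
     (\<exists>p a. valid_path h (p @ [a]) \<and>
        ((u = Some p \<and> v = Some (p @ [a])) \<or> (u = Some (p @ [a]) \<and> v = Some p))) \<or>
     (\<exists>p. valid_path h p \<and> level h p = 1 \<and>
        ((u = None \<and> v = Some p) \<or> (u = Some p \<and> v = None)))"

definition hat_dist :: "nat \<Rightarrow> vertex \<Rightarrow> vertex \<Rightarrow> nat" where
  "hat_dist h u v = (LEAST k. \<exists>w :: nat \<Rightarrow> vertex.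
      w 0 = u \<and> w k = v \<and> (\<forall>i<k. hat_adj h (w i) (w (Suc i))))"

text \<open>The cluster of a tree node at level j
  consists of the (j!)^3 points (Some p, i), i < (j!)^3; the point (Some p, 0) is identified
  with the node itself.\<close>
type_synonym point = "vertex \<times> nat"

definition Xh :: "nat \<Rightarrow> point set" where
  "Xh h = {(Some p, i) | p i. valid_path h p \<and> i < fact (level h p) ^ 3} \<union> {(None, 0)}"

definition ch :: "nat \<Rightarrow> point \<Rightarrow> point \<Rightarrow> real" where
  "ch h x y = (if fst x = fst y then 0 else real (hat_dist h (fst x) (fst y)))"

definition rho :: point where "rho = (Some [], 0)"
definition mu :: point where "mu = (None, 0)"

end

theory Submission
  imports Defs "HOL-Library.Sublist"
begin

(*
  Distances in T-hat have a closed form: a shortest walk between two tree nodes either passes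
  through their last common ancestor or runs down to the leaves, through mu, and back up.
  The cluster weights (j!)^3 grow so fast that all clusters in the subtree of a level-j node
  together weigh less than a single cluster one level higher.  Hence, once the duplicate points
  of the clusters and mu are gone, deleting a level-j representative is never more expensive
  than deleting a higher one, and all level-j representatives cost exactly the same: Reverse
  Greedy can delete the representatives level by level from the leaves upward and end at the
  root rho.  The root pays distance h - 1 for each of the (h+1)!^3/8 leaf points, whereas mu
  pays less than (h+1)!^3 in total.
*)

section \<open>Costs and rank-ordered greedy runs\<close>

lemma dist_set_le: "finite F \<Longrightarrow> f \<in> F \<Longrightarrow> dist_set c x F \<le> c x f"
  unfolding dist_set_def by (rule Min_le) auto

lemma dist_set_ge:
  "finite F \<Longrightarrow> F \<noteq> {} \<Longrightarrow> (\<And>f. f \<in> F \<Longrightarrow> a \<le> c x f) \<Longrightarrow> a \<le> dist_set c x F"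
  unfolding dist_set_def by (subst Min_ge_iff) auto

lemma dist_set_eqI:
  assumes "finite F" "f \<in> F" "c x f = a" "\<And>f. f \<in> F \<Longrightarrow> a \<le> c x f"
  shows "dist_set c x F = a"
proof (rule antisym)
  show "dist_set c x F \<le> a" using dist_set_le[OF assms(1,2), of c x] assms(3) by simp
  show "a \<le> dist_set c x F" using dist_set_ge[of F a c x] assms(1,2,4) by blast
qed

lemma dist_set_antimono:
  "finite F \<Longrightarrow> G \<subseteq> F \<Longrightarrow> G \<noteq> {} \<Longrightarrow> dist_set c x F \<le> dist_set c x G"
  unfolding dist_set_def by (rule Min_antimono) auto

lemma cost_singleton: "cost X c {y} = (\<Sum>x\<in>X. c x y)"
  by (simp add: cost_def dist_set_def)

lemma reverse_greedy_run_by_rank: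
  fixes rank :: "'a \<Rightarrow> nat"
  assumes "finite X" and "x0 \<in> X" and x0_first: "\<And>x. x \<in> X \<Longrightarrow> x \<noteq> x0 \<Longrightarrow> rank x0 < rank x"
    and greedy: "\<And>R r r'. R \<subseteq> X \<Longrightarrow> r \<in> R \<Longrightarrow> r' \<in> R \<Longrightarrow> 2 \<le> card R \<Longrightarrow>
        (\<And>x. x \<in> R \<Longrightarrow> rank x \<le> rank r) \<Longrightarrow> (\<And>x. x \<in> X \<Longrightarrow> rank x < rank r \<Longrightarrow> x \<in> R) \<Longrightarrow>
        cost X c (R - {r}) \<le> cost X c (R - {r'})"
  shows "\<exists>R. reverse_greedy_run X c R \<and> R 1 = {x0}"
proof -
  obtain xs where xs: "distinct xs" "set xs = X" using finite_distinct_list[OF assms(1)] by blast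
  define L where "L = sort_key rank xs"
  have L: "distinct L" "set L = X" "length L = card X"
    using xs by (auto simp: L_def distinct_card[symmetric])
  have rank_mono: "rank (L ! i) \<le> rank (L ! k)" if "i \<le> k" "k < length L" for i k
    using sorted_nth_mono[of "map rank L" i k] that by (simp add: L_def)
  \<comment> \<open>Each step deletes a point of maximal rank from the current prefix of the enumeration.\<close>
  define R where "R t = set (take t L)" for t
  have step: "\<exists>r\<in>R t. R (t - 1) = R t - {r} \<and>
      (\<forall>r'\<in>R t. cost X c (R t - {r}) \<le> cost X c (R t - {r'}))"
    if t: "2 \<le> t" "t \<le> card X" for t
  proof -
    define r where "r = L ! (t - 1)"
    have take_t: "take t L = take (t - 1) L @ [r]"
      using t L(3) take_Suc_conv_app_nth[of "t - 1" L] by (simp add: r_def)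
    have R_t: "x \<in> R t \<longleftrightarrow> (\<exists>k<t. x = L ! k)" for x
      using t L(3) by (auto simp: R_def in_set_conv_nth)
    have "r \<in> R t" using take_t by (simp add: R_def)
    moreover have "R (t - 1) = R t - {r}"
    proof -
      have "distinct (take (t - 1) L @ [r])" using distinct_take[OF L(1)] take_t by metis
      then show ?thesis using take_t by (auto simp: R_def)
    qed
    moreover have "cost X c (R t - {r}) \<le> cost X c (R t - {r'})" if "r' \<in> R t" for r'
    proof (rule greedy)
      show "R t \<subseteq> X" using L(2) by (auto simp: R_def dest: in_set_takeD)
      show "2 \<le> card (R t)" using t L by (simp add: R_def distinct_card)
      show "rank x \<le> rank r" if "x \<in> R t" for x
        using that t L(3) rank_mono[of _ "t - 1"] by (auto simp: R_t r_def)
      show "x \<in> R t" if x: "x \<in> X" and less: "rank x < rank r" for x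
      proof -
        obtain k where k: "k < length L" "x = L ! k"
          using x L(2) in_set_conv_nth[of x L] by auto
        have "\<not> t - 1 \<le> k" using rank_mono[of "t - 1" k] k less by (auto simp: r_def)
        then have "k < t" by simp
        then show ?thesis using k R_t by blast
      qed
    qed (use \<open>r \<in> R t\<close> that in auto)
    ultimately show ?thesis by blast
  qed
  have "L ! 0 = x0"
  proof (rule ccontr)
    assume "L ! 0 \<noteq> x0"
    moreover obtain k where "k < length L" "x0 = L ! k"
      using assms(2) L(2) by (auto simp: in_set_conv_nth)
    moreover have "L ! 0 \<in> X" using assms(2) L(2) by (cases L) auto
    ultimately show False using rank_mono[of 0 k] x0_first[of "L ! 0"] by auto
  qed
  then have "R 1 = {x0}" using assms(2) L(2) by (cases L) (auto simp: R_def)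
  moreover have "R (card X) = X" using L by (simp add: R_def)
  ultimately show ?thesis using step unfolding reverse_greedy_run_def by blast
qed

section \<open>Shortest walks in T-hat\<close>

lemma relpow_sym:
  assumes "sym R" and "(x, y) \<in> R ^^ n"
  shows "(y, x) \<in> R ^^ n"
  using assms(2)
proof (induction n arbitrary: y)
  case (Suc n)
  then obtain z where "(x, z) \<in> R ^^ n" "(z, y) \<in> R" by (blast elim: relpow_Suc_E)
  with Suc.IH assms(1) show ?case by (blast intro: relpow_Suc_I2 dest: symD)
qed simp

lemma relpow_add_trans: "(x, y) \<in> R ^^ m \<Longrightarrow> (y, z) \<in> R ^^ n \<Longrightarrow> (x, z) \<in> R ^^ (m + n)"
  by (auto simp: relpow_add)

lemma relpow_potential_le:
  fixes d :: "'a \<Rightarrow> nat"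
  assumes "(x, y) \<in> R ^^ n" and "\<And>a b. (a, b) \<in> R \<Longrightarrow> d b \<le> d a + 1"
  shows "d y \<le> d x + n"
  using assms(1)
proof (induction n arbitrary: y)
  case (Suc n)
  then obtain z where "(x, z) \<in> R ^^ n" "(z, y) \<in> R" by (blast elim: relpow_Suc_E)
  with Suc.IH assms(2)[of z y] show ?case by fastforce
qed simp

lemma Least_relpow_eq_potential:
  fixes d :: "'a \<Rightarrow> nat"
  assumes "(x, y) \<in> R ^^ d y" and "d x = 0" and "\<And>a b. (a, b) \<in> R \<Longrightarrow> d b \<le> d a + 1"
  shows "(LEAST n. (x, y) \<in> R ^^ n) = d y"
proof (rule Least_equality)
  show "(x, y) \<in> R ^^ d y" by (fact assms(1))
  show "d y \<le> n" if "(x, y) \<in> R ^^ n" for n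
    using relpow_potential_le[where d = d, OF that assms(3)] assms(2) by simp
qed

abbreviation lcp_length :: "'a list \<Rightarrow> 'a list \<Rightarrow> nat" where
  "lcp_length xs ys \<equiv> length (longest_common_prefix xs ys)"

lemma lcp_length_le: "lcp_length xs ys \<le> length xs" "lcp_length xs ys \<le> length ys"
  by (meson prefix_length_le longest_common_prefix_prefix1 longest_common_prefix_prefix2)+

lemma lcp_length_snoc_ge: "lcp_length xs ys \<le> lcp_length xs (ys @ [y])"
  by (induction xs ys rule: longest_common_prefix.induct) auto

lemma lcp_length_snoc_le: "lcp_length xs (ys @ [y]) \<le> Suc (lcp_length xs ys)"
  by (induction xs ys rule: longest_common_prefix.induct) (use lcp_length_le(2)[of _ "[y]"] in auto)

lemma longest_common_prefix_self: "longest_common_prefix xs xs = xs"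
  by (induction xs) auto

lemma longest_common_prefix_take: "longest_common_prefix xs (take k xs) = take k xs"
  by (induction xs arbitrary: k) (auto simp: take_Cons split: nat.split)

lemma lcp_length_eq_length_prefix:
  assumes "lcp_length xs ys = length ys" shows "prefix ys xs"
proof -
  obtain zs where "ys = longest_common_prefix xs ys @ zs"
    using longest_common_prefix_prefix2 prefixE by metis
  with assms have "longest_common_prefix xs ys = ys"
    by (metis append_Nil2 length_0_conv add_left_imp_eq length_append)
  then show ?thesis using longest_common_prefix_prefix1 by metis
qed

lemma longest_common_prefix_Nil2 [simp]: "longest_common_prefix xs [] = []"
  by (cases xs) auto

abbreviation hat_edges :: "nat \<Rightarrow> (vertex \<times> vertex) set" where
  "hat_edges h \<equiv> {(u, v). hat_adj h u v}"

lemma hat_dist_Least_relpow: "hat_dist h u v = (LEAST n. (u, v) \<in> hat_edges h ^^ n)"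
  by (simp add: hat_dist_def relpow_fun_conv)

lemma hat_adj_commute: "hat_adj h u v = hat_adj h v u"
  unfolding hat_adj_def by blast

lemma sym_hat_edges: "sym (hat_edges h)"
  by (simp add: sym_def hat_adj_commute)

lemma valid_path_length: "valid_path h p \<Longrightarrow> length p \<le> h - 1"
  by (simp add: valid_path_def)

lemma valid_path_take: "valid_path h p \<Longrightarrow> valid_path h (take k p)"
  by (auto simp: valid_path_def)

lemma valid_path_append_zeros:
  "valid_path h p \<Longrightarrow> length p + m \<le> h - 1 \<Longrightarrow> valid_path h (p @ replicate m 0)"
  by (auto simp: valid_path_def nth_append)

lemma hat_walk_up:
  "valid_path h (p @ s) \<Longrightarrow> (Some (p @ s), Some p) \<in> hat_edges h ^^ length s"
proof (induction s rule: rev_induct)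
  case (snoc a s)
  have "valid_path h (p @ s)"
    using valid_path_take[OF snoc.prems, of "length (p @ s)"] by simp
  moreover have "hat_adj h (Some ((p @ s) @ [a])) (Some (p @ s))"
    unfolding hat_adj_def using snoc.prems by (intro disjI1 exI[of _ "p @ s"] exI[of _ a]) simp
  ultimately show ?case using snoc.IH relpow_Suc_I2[of "Some ((p @ s) @ [a])"] by simp
qed simp

lemma hat_walk_to_mu:
  assumes "valid_path h p" and "h \<ge> 1"
  shows "(Some p, None) \<in> hat_edges h ^^ (h - length p)"
proof -
  define m where "m = h - 1 - length p"
  define leaf where "leaf = p @ replicate m 0"
  have len: "length p \<le> h - 1" using valid_path_length[OF assms(1)] .
  have leaf: "valid_path h leaf" "level h leaf = 1"
    using valid_path_append_zeros[OF assms(1), of m] len assms(2)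
    by (auto simp: leaf_def m_def level_def)
  have "(Some leaf, Some p) \<in> hat_edges h ^^ m"
    using hat_walk_up[of h p "replicate m 0"] leaf by (simp add: leaf_def)
  then have "(Some p, Some leaf) \<in> hat_edges h ^^ m" by (rule relpow_sym[OF sym_hat_edges])
  moreover have "(Some leaf, None) \<in> hat_edges h"
    unfolding hat_adj_def using leaf by (intro CollectI case_prodI disjI2 exI[of _ leaf]) simp
  ultimately have "(Some p, None) \<in> hat_edges h ^^ Suc m" by (rule relpow_Suc_I)
  moreover have "Suc m = h - length p" using len assms(2) by (simp add: m_def)
  ultimately show ?thesis by simp
qed

definition hat_vertices :: "nat \<Rightarrow> vertex set" where
  "hat_vertices h = insert None (tree_nodes h)"

lemma in_hat_vertices_iff [simp]:
  "None \<in> hat_vertices h" "Some p \<in> hat_vertices h \<longleftrightarrow> valid_path h p"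
  by (auto simp: hat_vertices_def tree_nodes_def)

(* A shortest walk between two tree nodes either passes through their last common ancestor
   or descends to the leaves, crosses mu and climbs back. *)
fun closed_dist :: "nat \<Rightarrow> vertex \<Rightarrow> vertex \<Rightarrow> nat" where
  "closed_dist h (Some p) (Some q) =
     min (length p + length q - 2 * lcp_length p q) (2 * h - length p - length q)"
| "closed_dist h (Some p) None = h - length p"
| "closed_dist h None (Some q) = h - length q"
| "closed_dist h None None = 0"

lemma closed_dist_self [simp]: "closed_dist h u u = 0"
  by (cases u) (simp_all add: longest_common_prefix_self)

lemma closed_dist_take:
  assumes "valid_path h q" and "k \<le> length q"
  shows "closed_dist h (Some q) (Some (take k q)) = length q - k"
proof -
  have "lcp_length q (take k q) = k" using assms(2) by (simp add: longest_common_prefix_take)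
  then show ?thesis using assms(2) valid_path_length[OF assms(1)] by (simp add: min_def)
qed

lemma closed_dist_tree_edge:
  assumes "valid_path h (p @ [a])" and "u \<in> hat_vertices h"
  shows "closed_dist h u (Some (p @ [a])) \<le> closed_dist h u (Some p) + 1"
    and "closed_dist h u (Some p) \<le> closed_dist h u (Some (p @ [a])) + 1"
proof -
  have p: "length p + 1 \<le> h - 1" using valid_path_length[OF assms(1)] by simp
  have "closed_dist h u (Some (p @ [a])) \<le> closed_dist h u (Some p) + 1 \<and>
        closed_dist h u (Some p) \<le> closed_dist h u (Some (p @ [a])) + 1"
  proof (cases u)
    case (Some v)
    have "length v \<le> h - 1" using assms(2) Some valid_path_length by auto
    with p Some lcp_length_snoc_ge[of v p a] lcp_length_snoc_le[of v p a]
      lcp_length_le[of v p] lcp_length_le[of v "p @ [a]"]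
    show ?thesis by (simp add: min_def) arith
  qed (use p in \<open>simp; arith\<close>)
  then show "closed_dist h u (Some (p @ [a])) \<le> closed_dist h u (Some p) + 1"
    and "closed_dist h u (Some p) \<le> closed_dist h u (Some (p @ [a])) + 1" by simp_all
qed

lemma closed_dist_mu_edge:
  assumes "valid_path h p" and "level h p = 1" and "u \<in> hat_vertices h"
  shows "closed_dist h u (Some p) \<le> closed_dist h u None + 1"
    and "closed_dist h u None \<le> closed_dist h u (Some p) + 1"
proof -
  have p: "length p = h - 1" "h \<ge> 1" using assms(2) valid_path_length[OF assms(1)]
    by (auto simp: level_def)
  have "closed_dist h u (Some p) \<le> closed_dist h u None + 1 \<and>
        closed_dist h u None \<le> closed_dist h u (Some p) + 1"
  proof (cases u)
    case (Some v)
    have "length v \<le> h - 1" using assms(3) Some valid_path_length by auto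
    with p Some lcp_length_le[of v p] show ?thesis by (simp add: min_def) arith
  qed (use p in simp)
  then show "closed_dist h u (Some p) \<le> closed_dist h u None + 1"
    and "closed_dist h u None \<le> closed_dist h u (Some p) + 1" by simp_all
qed

lemma closed_dist_adj:
  assumes "u \<in> hat_vertices h" and "hat_adj h x y"
  shows "closed_dist h u y \<le> closed_dist h u x + 1"
  using assms(2) unfolding hat_adj_def
  by (elim disjE exE conjE)
    (metis closed_dist_tree_edge[OF _ assms(1)] closed_dist_mu_edge[OF _ _ assms(1)])+

lemma hat_walk_tree:
  assumes "valid_path h p" and "valid_path h q"
  shows "(Some p, Some q) \<in> hat_edges h ^^ (length p + length q - 2 * lcp_length p q)"
proof -
  let ?c = "longest_common_prefix p q"
  obtain s t where p: "p = ?c @ s" and q: "q = ?c @ t"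
    by (meson prefixE longest_common_prefix_prefix1 longest_common_prefix_prefix2)
  have "(Some p, Some ?c) \<in> hat_edges h ^^ length s"
    using hat_walk_up[of h ?c s] assms(1) p by simp
  moreover have "(Some ?c, Some q) \<in> hat_edges h ^^ length t"
    using hat_walk_up[of h ?c t] assms(2) q by (simp add: relpow_sym[OF sym_hat_edges])
  ultimately have "(Some p, Some q) \<in> hat_edges h ^^ (length s + length t)"
    by (rule relpow_add_trans)
  moreover have "length s + length t = length p + length q - 2 * lcp_length p q"
    using arg_cong[OF p, of length] arg_cong[OF q, of length] by simp
  ultimately show ?thesis by simp
qed

lemma hat_walk_closed_dist:
  assumes "u \<in> hat_vertices h" and "v \<in> hat_vertices h" and "h \<ge> 1"
  shows "(u, v) \<in> hat_edges h ^^ closed_dist h u v"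
proof (cases u; cases v)
  fix p q assume u: "u = Some p" and v: "v = Some q"
  have p: "valid_path h p" and q: "valid_path h q" using assms u v by auto
  have "(Some p, Some q) \<in> hat_edges h ^^ (h - length p + (h - length q))"
    using relpow_add_trans[OF hat_walk_to_mu[OF p assms(3)]
        relpow_sym[OF sym_hat_edges hat_walk_to_mu[OF q assms(3)]]] .
  moreover have "h - length p + (h - length q) = 2 * h - length p - length q"
    using valid_path_length[OF p] valid_path_length[OF q] by simp
  ultimately show ?thesis using hat_walk_tree[OF p q] u v by (simp add: min_def)
qed (use assms hat_walk_to_mu relpow_sym[OF sym_hat_edges] in auto)

lemma hat_dist_eq_closed_dist:
  assumes "u \<in> hat_vertices h" and "v \<in> hat_vertices h" and "h \<ge> 1"
  shows "hat_dist h u v = closed_dist h u v"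
  unfolding hat_dist_Least_relpow
  by (rule Least_relpow_eq_potential[where d = "closed_dist h u"])
    (use hat_walk_closed_dist[OF assms] closed_dist_adj[OF assms(1)] in auto)

lemma hat_dist_pos:
  assumes "u \<in> hat_vertices h" and "v \<in> hat_vertices h" and "h \<ge> 1" and "u \<noteq> v"
  shows "0 < hat_dist h u v"
proof -
  have "(u, v) \<in> hat_edges h ^^ hat_dist h u v"
    unfolding hat_dist_Least_relpow
    by (rule LeastI[of "\<lambda>n. (u, v) \<in> hat_edges h ^^ n", OF hat_walk_closed_dist[OF assms(1-3)]])
  with assms(4) show ?thesis by (cases "hat_dist h u v") auto
qed

lemma ch_eq_closed_dist:
  assumes "fst x \<in> hat_vertices h" and "fst y \<in> hat_vertices h" and "h \<ge> 1"
  shows "ch h x y = closed_dist h (fst x) (fst y)"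
  using assms by (simp add: ch_def hat_dist_eq_closed_dist)

lemma ch_ge_1:
  assumes "fst x \<in> hat_vertices h" and "fst y \<in> hat_vertices h" and "h \<ge> 1"
    and "fst x \<noteq> fst y"
  shows "1 \<le> ch h x y"
  using hat_dist_pos[OF assms] assms(4) by (simp add: ch_def)

lemma ch_nonneg: "0 \<le> ch h x y"
  by (simp add: ch_def)

section \<open>Sums over X_h and over subtrees\<close>

lemma finite_valid_paths: "finite {p. valid_path h p}"
proof (rule finite_subset)
  show "{p. valid_path h p} \<subseteq> {xs. set xs \<subseteq> {..<(h + 1) ^ 3} \<and> length xs \<le> h}"
  proof (rule subsetI, rule CollectI, rule conjI)
    fix p assume "p \<in> {p. valid_path h p}"
    then have p: "valid_path h p" by simp
    show "set p \<subseteq> {..<(h + 1) ^ 3}"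
    proof
      fix x assume "x \<in> set p"
      then obtain i where i: "i < length p" "x = p ! i" by (auto simp: in_set_conv_nth)
      with p have "x < (h - i + 1) ^ 3" by (simp add: valid_path_def)
      also have "\<dots> \<le> (h + 1) ^ 3" by (rule power_mono) auto
      finally show "x \<in> {..<(h + 1) ^ 3}" by simp
    qed
    show "length p \<le> h" using valid_path_length[OF p] by linarith
  qed
  show "finite {xs. set xs \<subseteq> {..<(h + 1) ^ 3} \<and> length xs \<le> h}"
    by (rule finite_lists_length_le) simp
qed

lemma Xh_eq:
  "Xh h = (\<lambda>(p, i). (Some p, i)) ` (SIGMA p:{p. valid_path h p}. {..<fact (level h p) ^ 3})
    \<union> {(None, 0)}"
  unfolding Xh_def by auto

lemma finite_Xh: "finite (Xh h)"
  unfolding Xh_eq by (simp add: finite_valid_paths)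

lemma fst_in_hat_vertices: "x \<in> Xh h \<Longrightarrow> fst x \<in> hat_vertices h"
  unfolding Xh_def by auto

lemma rep_in_Xh: "valid_path h p \<Longrightarrow> (Some p, 0) \<in> Xh h"
  unfolding Xh_def by auto

lemma mu_in_Xh: "mu \<in> Xh h"
  unfolding Xh_def mu_def by auto

lemma rho_in_Xh: "rho \<in> Xh h"
  unfolding rho_def by (rule rep_in_Xh) (simp add: valid_path_def)

lemma sum_Xh_fst:
  fixes g :: "vertex \<Rightarrow> real"
  shows "(\<Sum>x\<in>Xh h. g (fst x)) = (\<Sum>p | valid_path h p. fact (level h p) ^ 3 * g (Some p)) + g None"
proof -
  let ?S = "SIGMA p:{p. valid_path h p}. {..<fact (level h p) ^ 3 :: nat}"
  let ?f = "\<lambda>(p, i). (Some p, i)"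
  have "inj_on ?f ?S" by (auto simp: inj_on_def)
  moreover have "finite ?S" by (simp add: finite_valid_paths)
  ultimately have "(\<Sum>x\<in>Xh h. g (fst x)) = (\<Sum>(p, i)\<in>?S. g (Some p)) + g None"
    unfolding Xh_eq by (subst sum.union_disjoint) (auto simp: sum.reindex intro!: sum.cong)
  also have "(\<Sum>(p, i)\<in>?S. g (Some p)) = (\<Sum>p | valid_path h p. fact (level h p) ^ 3 * g (Some p))"
    by (subst sum.Sigma[symmetric]) (auto simp: finite_valid_paths)
  finally show ?thesis .
qed

definition subtree :: "nat \<Rightarrow> nat list \<Rightarrow> nat list set" where
  "subtree h a = {q. valid_path h q \<and> prefix a q}"

lemma subtree_Nil: "subtree h [] = {p. valid_path h p}"
  by (simp add: subtree_def)

lemma valid_path_prefix: "valid_path h q \<Longrightarrow> prefix p q \<Longrightarrow> valid_path h p"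
  by (metis prefixE append_eq_conv_conj valid_path_take)

lemma valid_path_snoc_iff:
  "valid_path h (a @ [c]) \<longleftrightarrow> valid_path h a \<and> 2 \<le> level h a \<and> c < (level h a + 1) ^ 3"
  by (auto simp: valid_path_def level_def nth_append less_Suc_eq)

lemma subtree_decompose:
  assumes "valid_path h a"
  shows "subtree h a = insert a (\<Union>c\<in>{c. valid_path h (a @ [c])}. subtree h (a @ [c]))"
proof (intro equalityI subsetI)
  fix q assume "q \<in> subtree h a"
  then obtain zs where q: "valid_path h q" "q = a @ zs" by (auto simp: subtree_def elim: prefixE)
  show "q \<in> insert a (\<Union>c\<in>{c. valid_path h (a @ [c])}. subtree h (a @ [c]))"
  proof (cases zs)
    case (Cons c zs')
    then have "valid_path h (a @ [c])" using q valid_path_prefix[of h q "a @ [c]"] by simp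
    with q Cons show ?thesis by (auto simp: subtree_def)
  qed (use q in simp)
qed (use assms in \<open>auto simp: subtree_def strict_prefix_def dest: prefix_snocD\<close>)

(* The sum of f (level h q) over the subtree of a node at level j: a node at level j + 1 has
   (j + 2)^3 children (for j = 0 the factor is irrelevant, as subtree_sum f 0 = 0). *)
fun subtree_sum :: "(nat \<Rightarrow> real) \<Rightarrow> nat \<Rightarrow> real" where
  "subtree_sum f 0 = 0"
| "subtree_sum f (Suc j) = f (Suc j) + (j + 2) ^ 3 * subtree_sum f j"

lemma finite_subtree: "finite (subtree h a)"
  unfolding subtree_def using finite_valid_paths by (rule finite_subset[rotated]) auto

lemma sum_subtree:
  assumes "valid_path h a" and "h \<ge> 1"
  shows "(\<Sum>q\<in>subtree h a. f (level h q)) = subtree_sum f (level h a)"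
  using assms(1)
proof (induction "level h a" arbitrary: a)
  case 0
  then show ?case using valid_path_length[OF 0(2)] assms(2) by (simp add: level_def)
next
  case (Suc j)
  let ?C = "{c. valid_path h (a @ [c])}"
  have children: "(\<Sum>q\<in>subtree h (a @ [c]). f (level h q)) = subtree_sum f j" if "c \<in> ?C" for c
  proof -
    have "level h (a @ [c]) = j" using Suc.hyps(2) by (simp add: level_def)
    then show ?thesis using Suc.hyps(1)[of "a @ [c]"] that by simp
  qed
  have fin_C: "finite ?C"
    by (rule finite_subset[of _ "{..<(level h a + 1) ^ 3}"]) (auto simp: valid_path_snoc_iff)
  have a_notin: "a \<notin> (\<Union>c\<in>?C. subtree h (a @ [c]))"
    by (auto simp: subtree_def dest: prefix_length_le)
  have disjoint: "subtree h (a @ [c]) \<inter> subtree h (a @ [c']) = {}" if "c \<noteq> c'" for c c'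
    using that by (auto simp: subtree_def prefix_def)
  have "(\<Sum>q\<in>subtree h a. f (level h q))
      = f (Suc j) + (\<Sum>q\<in>(\<Union>c\<in>?C. subtree h (a @ [c])). f (level h q))"
    unfolding subtree_decompose[OF Suc.prems] using fin_C a_notin Suc.hyps(2)
    by (simp add: finite_subtree)
  also have "(\<Sum>q\<in>(\<Union>c\<in>?C. subtree h (a @ [c])). f (level h q))
      = (\<Sum>c\<in>?C. \<Sum>q\<in>subtree h (a @ [c]). f (level h q))"
    by (rule sum.UNION_disjoint) (use fin_C disjoint in \<open>auto simp: finite_subtree\<close>)
  also have "\<dots> = card ?C * subtree_sum f j"
    using children by simp
  also have "card ?C * subtree_sum f j = (j + 2) ^ 3 * subtree_sum f j"
  proof (cases "j = 0")
    case False
    then have "?C = {..<(j + 2) ^ 3}"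
      using Suc.prems Suc.hyps(2) by (auto simp: valid_path_snoc_iff)
    then show ?thesis by simp
  qed simp
  finally show ?case using Suc.hyps(2)[symmetric] by (simp add: algebra_simps)
qed

lemma fact_cube_Suc: "(fact (Suc n) ^ 3 :: real) = real (Suc n) ^ 3 * fact n ^ 3"
  by (simp only: fact_Suc of_nat_fact power_mult_distrib)

lemma subtree_sum_eq:
  "subtree_sum f j = fact (j + 1) ^ 3 * (\<Sum>k = 1..j. f k / fact (k + 1) ^ 3)"
proof (induction j)
  case (Suc j)
  let ?S = "\<Sum>k = 1..j. f k / fact (k + 1) ^ 3"
  have "subtree_sum f (Suc j) = f (Suc j) + (real j + 2) ^ 3 * fact (Suc j) ^ 3 * ?S"
    using Suc.IH by (simp del: fact_Suc)
  also have "\<dots> = fact (Suc (Suc j)) ^ 3 * (?S + f (Suc j) / fact (Suc (Suc j)) ^ 3)"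
    using fact_cube_Suc[of "Suc j"] by (simp add: field_simps del: fact_Suc)
  finally show ?case by (simp del: fact_Suc)
qed simp

lemma subtree_sum_mono:
  assumes "\<And>k. 1 \<le> k \<Longrightarrow> f k \<le> g k"
  shows "subtree_sum f j \<le> subtree_sum g j"
proof (induction j)
  case (Suc j)
  then show ?case using assms[of "Suc j"] by (simp add: add_mono)
qed simp

lemma sum_ratio_cube_le: "(\<Sum>k = 1..j. real k / (real k + 1) ^ 3) \<le> 1 - 1 / (real j + 1)"
proof (induction j)
  case (Suc j)
  define y where "y = real (Suc j)"
  have y: "0 < y" by (simp add: y_def)
  have "y ^ 2 * (y + 1) \<le> (y + 1) ^ 2 * (y + 1)"
    using y by (intro mult_right_mono power_mono) auto
  then have "y / (y + 1) ^ 3 \<le> y / (y ^ 2 * (y + 1))"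
    using y by (intro frac_le) (auto simp: power3_eq_cube power2_eq_square)
  also have "\<dots> = 1 / (y * (y + 1))"
    using y by (simp add: power2_eq_square)
  also have "\<dots> = 1 / y - 1 / (y + 1)"
    using y by (simp add: field_simps)
  finally have "y / (y + 1) ^ 3 \<le> 1 / y - 1 / (y + 1)" .
  moreover have "(\<Sum>k = 1..j. real k / (real k + 1) ^ 3) \<le> 1 - 1 / y"
    using Suc.IH by (simp add: y_def add.commute)
  moreover have "(\<Sum>k = 1..Suc j. real k / (real k + 1) ^ 3)
      = (\<Sum>k = 1..j. real k / (real k + 1) ^ 3) + y / (y + 1) ^ 3"
    by (simp add: y_def)
  moreover have "1 - 1 / (real (Suc j) + 1) = 1 - 1 / (y + 1)" by (simp add: y_def)
  ultimately show ?case by linarith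
qed simp

lemma subtree_sum_level_weight_le:
  "subtree_sum (\<lambda>k. fact k ^ 3 * real k) j + fact j * fact (Suc j) ^ 2 \<le> fact (Suc j) ^ 3"
proof -
  have "subtree_sum (\<lambda>k. fact k ^ 3 * real k) j
      = fact (Suc j) ^ 3 * (\<Sum>k = 1..j. real k / (real k + 1) ^ 3)"
    unfolding subtree_sum_eq by (simp add: fact_cube_Suc add.commute del: fact_Suc)
  also have "\<dots> \<le> fact (Suc j) ^ 3 * (1 - 1 / (real j + 1))"
    by (rule mult_left_mono[OF sum_ratio_cube_le]) simp
  also have "\<dots> = fact (Suc j) ^ 3 - fact j * fact (Suc j) ^ 2"
    by (simp add: field_simps power2_eq_square power3_eq_cube)
  finally show ?thesis by simp
qed

lemma subtree_sum_cluster_weight_le: "subtree_sum (\<lambda>k. fact k ^ 3) j + 1 \<le> fact (Suc j) ^ 3"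
proof -
  have "subtree_sum (\<lambda>k. fact k ^ 3) j \<le> subtree_sum (\<lambda>k. fact k ^ 3 * real k) j"
    by (rule subtree_sum_mono) simp
  moreover have "1 \<le> (fact j * fact (Suc j) ^ 2 :: real)"
    using mult_mono[of 1 "fact j" 1 "fact (Suc j) ^ 2 :: real"]
    by (simp add: fact_ge_1 one_le_power del: fact_Suc)
  ultimately show ?thesis using subtree_sum_level_weight_le[of j] by linarith
qed

lemma subtree_sum_leaves:
  assumes "1 \<le> j"
  shows "subtree_sum (\<lambda>k. if k = 1 then 1 else 0) j = fact (Suc j) ^ 3 / 8"
  using assms
proof (induction j rule: nat_induct_at_least)
  case (Suc j)
  then show ?case using fact_cube_Suc[of "Suc j"] by (simp add: algebra_simps del: fact_Suc)
qed simp

lemma sum_valid_paths_level: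
  "h \<ge> 1 \<Longrightarrow> (\<Sum>p | valid_path h p. f (level h p)) = subtree_sum f h"
  using sum_subtree[of h "[]" f] by (simp add: subtree_Nil level_def valid_path_def)

section \<open>Single facilities\<close>

lemma card_Xh_le:
  assumes "h \<ge> 1"
  shows "card (Xh h) \<le> fact (h + 1) ^ 3"
proof -
  have "real (card (Xh h)) = subtree_sum (\<lambda>k. fact k ^ 3) h + 1"
    using sum_Xh_fst[where g = "\<lambda>_. 1"] sum_valid_paths_level[OF assms, of "\<lambda>k. fact k ^ 3"] by simp
  also have "\<dots> \<le> fact (Suc h) ^ 3" by (rule subtree_sum_cluster_weight_le)
  finally show ?thesis by (metis Suc_eq_plus1 of_nat_fact of_nat_le_iff of_nat_power)
qed

lemma cost_singleton_closed_dist: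
  assumes "h \<ge> 1" and "y \<in> Xh h"
  shows "cost (Xh h) (ch h) {y} = (\<Sum>x\<in>Xh h. real (closed_dist h (fst x) (fst y)))"
  unfolding cost_singleton
  by (rule sum.cong) (use assms in \<open>auto simp: ch_eq_closed_dist fst_in_hat_vertices\<close>)

lemma cost_mu_lt:
  assumes "h \<ge> 1"
  shows "cost (Xh h) (ch h) {mu} < fact (h + 1) ^ 3"
proof -
  have "cost (Xh h) (ch h) {mu} = subtree_sum (\<lambda>k. fact k ^ 3 * real k) h"
    unfolding cost_singleton_closed_dist[OF assms mu_in_Xh]
    using sum_Xh_fst[where g = "\<lambda>u. real (closed_dist h u None)"]
      sum_valid_paths_level[OF assms, of "\<lambda>k. fact k ^ 3 * real k"]
    by (simp add: mu_def level_def)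
  also have "\<dots> < fact (Suc h) ^ 3"
  proof -
    have "0 < (fact h * fact (Suc h) ^ 2 :: real)" by (simp del: fact_Suc)
    then show ?thesis using subtree_sum_level_weight_le[of h] by linarith
  qed
  finally show ?thesis by simp
qed

lemma cost_rho_ge:
  assumes "h \<ge> 2"
  shows "(real h - 1) * fact (h + 1) ^ 3 / 8 \<le> cost (Xh h) (ch h) {rho}"
proof -
  have h: "h \<ge> 1" using assms by simp
  have "(real h - 1) * fact (h + 1) ^ 3 / 8
      = (\<Sum>p | valid_path h p. (real h - 1) * (if level h p = 1 then 1 else 0))"
    using sum_valid_paths_level[OF h, of "\<lambda>k. if k = 1 then 1 else 0"] subtree_sum_leaves[OF h]
    by (simp add: sum_distrib_left[symmetric] del: fact_Suc)
  also have "\<dots> \<le>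
      (\<Sum>p | valid_path h p. fact (level h p) ^ 3 * real (closed_dist h (Some p) (Some [])))"
  proof (rule sum_mono)
    fix p assume "p \<in> {p. valid_path h p}"
    then have "length p \<le> h - 1" using valid_path_length by blast
    then show "(real h - 1) * (if level h p = 1 then 1 else 0)
        \<le> fact (level h p) ^ 3 * real (closed_dist h (Some p) (Some []))"
      using h by (auto simp: level_def min_def of_nat_diff)
  qed
  also have "\<dots> \<le> cost (Xh h) (ch h) {rho}"
    unfolding cost_singleton_closed_dist[OF h rho_in_Xh]
    using sum_Xh_fst[where g = "\<lambda>u. real (closed_dist h u (Some []))"] by (simp add: rho_def)
  finally show ?thesis .
qed

lemma cost_singleton_pos:
  assumes "h \<ge> 1" and "x \<in> Xh h"
  shows "0 < cost (Xh h) (ch h) {x}"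
proof -
  define y where "y = (if fst x = None then rho else mu)"
  have y: "y \<in> Xh h" "fst y \<noteq> fst x"
    using rho_in_Xh mu_in_Xh by (auto simp: y_def rho_def mu_def)
  have "1 \<le> ch h y x"
    using ch_ge_1[OF fst_in_hat_vertices[OF y(1)] fst_in_hat_vertices[OF assms(2)] assms(1) y(2)] .
  also have "\<dots> \<le> (\<Sum>z\<in>Xh h. ch h z x)"
    by (rule member_le_sum[OF y(1)]) (simp_all add: ch_nonneg finite_Xh)
  finally show ?thesis by (simp add: cost_singleton)
qed

section \<open>Deleting cluster representatives\<close>

lemma cost_nonneg: "finite F \<Longrightarrow> F \<noteq> {} \<Longrightarrow> 0 \<le> cost X (ch h) F"
  unfolding cost_def by (intro sum_nonneg dist_set_ge) (auto simp: ch_nonneg)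

lemma dist_set_same_cluster: "finite F \<Longrightarrow> f \<in> F \<Longrightarrow> fst f = fst x \<Longrightarrow> dist_set (ch h) x F = 0"
  by (rule dist_set_eqI) (auto simp: ch_def)

lemma cluster_weight:
  assumes "valid_path h b"
  shows "(\<Sum>x\<in>Xh h. if fst x = Some b then 1 else 0 :: real) = fact (level h b) ^ 3"
  using sum_Xh_fst[where g = "\<lambda>u. if u = Some b then 1 else 0"] assms
  by (simp add: finite_valid_paths if_distrib[of "\<lambda>x. _ * x"] cong: if_cong)

lemma subtree_weight:
  assumes "valid_path h a" and "h \<ge> 1"
  shows "(\<Sum>x\<in>Xh h. if fst x \<in> Some ` subtree h a then 1 else 0 :: real)
    = subtree_sum (\<lambda>k. fact k ^ 3) (level h a)"
proof -
  have "(\<Sum>x\<in>Xh h. if fst x \<in> Some ` subtree h a then 1 else 0 :: real)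
      = (\<Sum>p | valid_path h p. if p \<in> subtree h a then fact (level h p) ^ 3 else 0)"
    using sum_Xh_fst[where g = "\<lambda>u. if u \<in> Some ` subtree h a then 1 else 0"]
    by (simp add: image_iff if_distrib[of "\<lambda>x. _ * x"] cong: if_cong)
  also have "\<dots> = (\<Sum>p\<in>{p. valid_path h p} \<inter> subtree h a. fact (level h p) ^ 3)"
    by (rule sum.inter_restrict[OF finite_valid_paths, symmetric])
  also have "{p. valid_path h p} \<inter> subtree h a = subtree h a" by (auto simp: subtree_def)
  finally show ?thesis using sum_subtree[OF assms] by simp
qed

lemma cost_remove_sole_rep:
  assumes "h \<ge> 1" and "F \<subseteq> Xh h" and "r \<in> F" and "F - {r} \<noteq> {}"
    and "fst r = Some b" and "valid_path h b" and sole: "\<And>f. f \<in> F \<Longrightarrow> fst f = fst r \<Longrightarrow> f = r"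
  shows "cost (Xh h) (ch h) F + fact (level h b) ^ 3 \<le> cost (Xh h) (ch h) (F - {r})"
proof -
  have fin: "finite F" using assms(2) finite_Xh finite_subset by blast
  have "dist_set (ch h) x F + (if fst x = Some b then 1 else 0) \<le> dist_set (ch h) x (F - {r})"
    if x: "x \<in> Xh h" for x
  proof (cases "fst x = Some b")
    case True
    have "dist_set (ch h) x F = 0"
      using dist_set_same_cluster[OF fin assms(3)] True assms(5) by simp
    moreover have "1 \<le> dist_set (ch h) x (F - {r})"
    proof (rule dist_set_ge)
      fix f assume f: "f \<in> F - {r}"
      then have "fst x \<noteq> fst f" using sole[of f] True assms(5) by force
      then show "1 \<le> ch h x f"
        using ch_ge_1 fst_in_hat_vertices x f assms(1,2) by blast
    qed (use fin assms(4) in auto)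
    ultimately show ?thesis using True by simp
  next
    case False
    then show ?thesis using dist_set_antimono[OF fin _ assms(4)] by auto
  qed
  then have "(\<Sum>x\<in>Xh h. dist_set (ch h) x F + (if fst x = Some b then 1 else 0))
      \<le> cost (Xh h) (ch h) (F - {r})"
    unfolding cost_def by (rule sum_mono)
  then show ?thesis
    using cluster_weight[OF assms(6)] by (simp add: cost_def sum.distrib)
qed

definition reps :: "nat list set \<Rightarrow> point set" where
  "reps P = (\<lambda>p. (Some p, 0)) ` P"

lemma reps_subset_Xh: "P \<subseteq> {p. valid_path h p} \<Longrightarrow> reps P \<subseteq> Xh h"
  by (auto simp: reps_def intro: rep_in_Xh)

definition cut_nodes :: "nat \<Rightarrow> nat \<Rightarrow> nat list set \<Rightarrow> nat list set" where
  "cut_nodes h j B = {p. valid_path h p \<and> j < level h p} \<union> B"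

(* The distance to the representatives of all nodes above level j together with those of the
   level-j nodes in B; take (h - j) q is the level-j ancestor of q. *)
definition cut_dist :: "nat \<Rightarrow> nat \<Rightarrow> nat list set \<Rightarrow> vertex \<Rightarrow> nat" where
  "cut_dist h j B u = (case u of
      None \<Rightarrow> j + (if B = {} then 1 else 0)
    | Some q \<Rightarrow> if j < level h q then 0 else j - level h q + (if take (h - j) q \<in> B then 0 else 1))"

locale level_cut =
  fixes h j :: nat and B :: "nat list set"
  assumes j_pos: "1 \<le> j" and j_less: "j < h"
    and B_level: "B \<subseteq> {p. valid_path h p \<and> level h p = j}"
begin

lemma cut_nodes_memD:
  assumes "v \<in> cut_nodes h j B"
  shows "valid_path h v" "length v \<le> h - j" "length v = h - j \<Longrightarrow> v \<in> B"
  using assms B_level j_pos j_less by (auto simp: cut_nodes_def level_def)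

lemma finite_cut_nodes: "finite (cut_nodes h j B)"
  using B_level by (auto simp: cut_nodes_def intro: finite_subset[OF _ finite_valid_paths])

lemma cut_dist_le_closed_dist:
  assumes u: "u \<in> hat_vertices h" and v: "v \<in> cut_nodes h j B"
  shows "cut_dist h j B u \<le> closed_dist h u (Some v)"
proof (cases u)
  case None
  have "length v \<le> h - j" "B = {} \<Longrightarrow> length v \<noteq> h - j" using cut_nodes_memD[OF v] by auto
  then show ?thesis using None j_less by (cases "B = {}") (simp_all add: cut_dist_def)
next
  case (Some q)
  have q: "length q \<le> h - 1" using u Some valid_path_length by auto
  have lcp: "lcp_length q v \<le> length v" by (rule lcp_length_le)
  show ?thesis
  proof (cases "j < level h q")
    case False
    define d where "d = length q - (h - j)"
    have v_len: "length v \<le> h - j" by (rule cut_nodes_memD(2)[OF v])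
    have cut: "cut_dist h j B u = d + (if take (h - j) q \<in> B then 0 else 1)"
      using False Some q j_less by (simp add: cut_dist_def level_def d_def)
    have tree:
      "d + (if take (h - j) q \<in> B then 0 else 1) \<le> length q + length v - 2 * lcp_length q v"
    proof (cases "length q + length v - 2 * lcp_length q v < d + 1")
      case True
      then have "lcp_length q v = length v" and len: "length v = h - j"
        using lcp v_len False by (auto simp: level_def d_def)
      then have "prefix v q" by (intro lcp_length_eq_length_prefix)
      then have "take (h - j) q = v" using len by (auto simp: prefix_def)
      then have "take (h - j) q \<in> B" using cut_nodes_memD(3)[OF v] len by simp
      then show ?thesis using lcp v_len by (simp add: d_def)
    qed simp
    have mu: "d + 1 \<le> 2 * h - length q - length v"
      using q v_len j_less by (simp add: d_def)
    show ?thesis unfolding cut using tree mu Some by simp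
  qed (simp add: Some cut_dist_def)
qed

lemma cut_dist_below:
  assumes "valid_path h q" and "\<not> j < level h q"
  shows "cut_dist h j B (Some q) = length q - (if take (h - j) q \<in> B then h - j else h - j - 1)"
  using assms(2) j_less valid_path_length[OF assms(1)]
  by (simp add: cut_dist_def level_def split: if_split) linarith

lemma cut_dist_attained:
  assumes "u \<in> hat_vertices h"
  obtains v where "v \<in> cut_nodes h j B" and "closed_dist h u (Some v) = cut_dist h j B u"
proof (cases u)
  case None
  show ?thesis
  proof (cases "B = {}")
    case True
    let ?v = "replicate (h - j - 1) 0 :: nat list"
    have "valid_path h ?v"
      using valid_path_append_zeros[of h "[]" "h - j - 1"] by (simp add: valid_path_def)
    then have "?v \<in> cut_nodes h j B" using j_less by (simp add: cut_nodes_def level_def)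
    then show ?thesis using that None True j_less by (simp add: cut_dist_def)
  next
    case False
    then obtain b where "b \<in> B" by blast
    then show ?thesis
      using that None False B_level by (auto simp: cut_nodes_def cut_dist_def level_def)
  qed
next
  case (Some q)
  have q: "valid_path h q" using assms Some by simp
  show ?thesis
  proof (cases "j < level h q")
    case True
    then show ?thesis using that[of q] q Some by (simp add: cut_nodes_def cut_dist_def)
  next
    case False
    define k where "k = (if take (h - j) q \<in> B then h - j else h - j - 1)"
    have k: "k \<le> length q" using False by (auto simp: k_def level_def)
    have "take k q \<in> cut_nodes h j B"
      using valid_path_take[OF q] False j_less by (auto simp: k_def cut_nodes_def level_def)
    moreover have "closed_dist h u (Some (take k q)) = cut_dist h j B u"
      using closed_dist_take[OF q k] cut_dist_below[OF q False] Some
      by (simp add: k_def del: closed_dist.simps)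
    ultimately show ?thesis by (rule that)
  qed
qed

lemma dist_set_cut:
  assumes "x \<in> Xh h"
  shows "dist_set (ch h) x (reps (cut_nodes h j B)) = cut_dist h j B (fst x)"
proof -
  have h: "h \<ge> 1" using j_less by simp
  have ch: "ch h x (Some v, 0) = closed_dist h (fst x) (Some v)" if "v \<in> cut_nodes h j B" for v
    using ch_eq_closed_dist[OF fst_in_hat_vertices[OF assms]] cut_nodes_memD(1)[OF that] h by simp
  obtain v where "v \<in> cut_nodes h j B" "closed_dist h (fst x) (Some v) = cut_dist h j B (fst x)"
    using cut_dist_attained fst_in_hat_vertices[OF assms] by metis
  then show ?thesis unfolding reps_def
    by (intro dist_set_eqI[of _ "(Some v, 0)"])
      (use finite_cut_nodes ch cut_dist_le_closed_dist fst_in_hat_vertices[OF assms] in auto)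
qed

lemma cost_cut:
  "cost (Xh h) (ch h) (reps (cut_nodes h j B)) = (\<Sum>x\<in>Xh h. real (cut_dist h j B (fst x)))"
  unfolding cost_def by (rule sum.cong) (simp_all add: dist_set_cut)

lemma cut_dist_remove:
  assumes "a \<in> B" and "u \<in> hat_vertices h"
  shows "real (cut_dist h j (B - {a}) u) = real (cut_dist h j B u)
    + (if u \<in> Some ` subtree h a then 1 else 0) + (if u = None \<and> B = {a} then 1 else 0)"
proof (cases u)
  case None
  then show ?thesis using assms(1) by (auto simp: cut_dist_def)
next
  case (Some q)
  have a: "length a = h - j" using assms(1) B_level j_pos by (auto simp: level_def)
  have "u \<in> Some ` subtree h a \<longleftrightarrow> \<not> j < level h q \<and> take (h - j) q = a"
    using assms(2) Some a
    by (auto simp: subtree_def prefix_def level_def intro!: image_eqI exI[of _ "drop (h - j) q"])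
  then show ?thesis using Some assms(1) by (auto simp: cut_dist_def)
qed

lemma cost_cut_remove:
  assumes "a \<in> B"
  shows "cost (Xh h) (ch h) (reps (cut_nodes h j (B - {a})))
    = cost (Xh h) (ch h) (reps (cut_nodes h j B)) + subtree_sum (\<lambda>k. fact k ^ 3) j
      + (if B = {a} then 1 else 0)"
proof -
  interpret B': level_cut h j "B - {a}" using B_level j_pos j_less by unfold_locales auto
  have a: "valid_path h a" "level h a = j" using assms B_level by auto
  have "cost (Xh h) (ch h) (reps (cut_nodes h j (B - {a})))
      = (\<Sum>x\<in>Xh h. real (cut_dist h j B (fst x)) + (if fst x \<in> Some ` subtree h a then 1 else 0)
          + (if fst x = None \<and> B = {a} then 1 else 0))"
    unfolding B'.cost_cut by (intro sum.cong refl cut_dist_remove[OF assms] fst_in_hat_vertices)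
  also have "\<dots> = cost (Xh h) (ch h) (reps (cut_nodes h j B))
      + (\<Sum>x\<in>Xh h. if fst x \<in> Some ` subtree h a then 1 else 0)
      + (\<Sum>x\<in>Xh h. if fst x = None \<and> B = {a} then 1 else 0)"
    by (simp add: sum.distrib cost_cut)
  also have "(\<Sum>x\<in>Xh h. if fst x \<in> Some ` subtree h a then 1 else 0)
      = subtree_sum (\<lambda>k. fact k ^ 3) j"
    using subtree_weight[OF a(1)] a(2) j_less by simp
  also have "(\<Sum>x\<in>Xh h. if fst x = None \<and> B = {a} then 1 else 0 :: real)
      = (if B = {a} then 1 else 0)"
    using sum_Xh_fst[where g = "\<lambda>u. if u = None \<and> B = {a} then 1 else 0"] by simp
  finally show ?thesis .
qed

end

(* All level-j representatives cost the same, the weight of their subtree (plus 1 for the last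
   one), which is less than the weight of any single cluster above level j. *)
lemma (in level_cut) greedy_remove_rep:
  assumes "a \<in> B" and "r' \<in> reps (cut_nodes h j B)"
  shows "cost (Xh h) (ch h) (reps (cut_nodes h j B) - {(Some a, 0)})
    \<le> cost (Xh h) (ch h) (reps (cut_nodes h j B) - {r'})"
proof -
  let ?R = "reps (cut_nodes h j B)" and ?c = "cost (Xh h) (ch h)"
  have remove: "?R - {(Some b, 0)} = reps (cut_nodes h j (B - {b}))" if "b \<in> B" for b
    using that B_level by (auto simp: reps_def cut_nodes_def)
  obtain b where r': "r' = (Some b, 0)" "b \<in> cut_nodes h j B"
    using assms(2) by (auto simp: reps_def)
  show ?thesis
  proof (cases "b \<in> B")
    case True
    then show ?thesis
      using remove cost_cut_remove[OF assms(1)] cost_cut_remove[OF True] r' assms(1) by auto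
  next
    case False
    then have b: "valid_path h b" "j < level h b" using r'(2) by (auto simp: cut_nodes_def)
    have R: "?R \<subseteq> Xh h" using B_level by (intro reps_subset_Xh) (auto simp: cut_nodes_def)
    have "?c (?R - {(Some a, 0)})
        = ?c ?R + subtree_sum (\<lambda>k. fact k ^ 3) j + (if B = {a} then 1 else 0)"
      using remove[OF assms(1)] cost_cut_remove[OF assms(1)] by simp
    also have "\<dots> \<le> ?c ?R + fact (Suc j) ^ 3"
      using subtree_sum_cluster_weight_le[of j] by (simp del: fact_Suc)
    also have "\<dots> \<le> ?c ?R + fact (level h b) ^ 3"
      using b(2) by (simp del: fact_Suc add: fact_mono power_mono)
    also have "\<dots> \<le> ?c (?R - {r'})"
    proof (rule cost_remove_sole_rep[OF _ R])
      show "r' \<in> ?R" by (fact assms(2))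
      show "?R - {r'} \<noteq> {}" using assms(1) False r' by (auto simp: reps_def cut_nodes_def)
    qed (use j_less b r' in \<open>auto simp: reps_def\<close>)
    finally show ?thesis .
  qed
qed

abbreviation all_reps :: "nat \<Rightarrow> point set" where
  "all_reps h \<equiv> reps {p. valid_path h p}"

lemma greedy_remove_duplicate:
  assumes "R \<subseteq> Xh h" and "all_reps h \<subseteq> R" and "mu \<in> R" and "snd r \<noteq> 0"
    and "R - {r'} \<noteq> {}"
  shows "cost (Xh h) (ch h) (R - {r}) \<le> cost (Xh h) (ch h) (R - {r'})"
proof -
  have fin: "finite R" using assms(1) finite_Xh finite_subset by blast
  have "dist_set (ch h) x (R - {r}) = 0" if "x \<in> Xh h" for x
  proof -
    have "(fst x, 0) \<in> R - {r}" using that assms(2-4) by (auto simp: Xh_def reps_def mu_def)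
    then show ?thesis using dist_set_same_cluster[of "R - {r}" "(fst x, 0)" x h] fin by simp
  qed
  then have "cost (Xh h) (ch h) (R - {r}) = 0" by (simp add: cost_def)
  then show ?thesis using cost_nonneg[of "R - {r'}"] fin assms(5) by simp
qed

lemma greedy_remove_mu:
  assumes "h \<ge> 1" and "all_reps h \<subseteq> R" and "R \<subseteq> insert mu (all_reps h)"
    and "r' \<in> R" and "R - {r'} \<noteq> {}"
  shows "cost (Xh h) (ch h) (R - {mu}) \<le> cost (Xh h) (ch h) (R - {r'})"
proof (cases "r' = mu")
  case False
  have R: "R \<subseteq> Xh h" using assms(3) mu_in_Xh reps_subset_Xh[of "{p. valid_path h p}" h] by blast
  have fin: "finite R" using R finite_Xh finite_subset by blast
  obtain b where r': "r' = (Some b, 0)" "valid_path h b"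
    using assms(3,4) False by (auto simp: reps_def)
  define leaf where "leaf = replicate (h - 1) (0 :: nat)"
  have leaf: "(Some leaf, 0) \<in> R - {mu}" "valid_path h leaf"
    using assms(2) valid_path_append_zeros[of h "[]" "h - 1"]
    by (auto simp: leaf_def reps_def mu_def valid_path_def)
  have "dist_set (ch h) x (R - {mu}) \<le> (if fst x = None then 1 else 0)" if x: "x \<in> Xh h" for x
  proof (cases "fst x")
    case None
    have "dist_set (ch h) x (R - {mu}) \<le> ch h x (Some leaf, 0)"
      using fin leaf by (intro dist_set_le) auto
    also have "\<dots> = 1"
      using ch_eq_closed_dist[of x h "(Some leaf, 0)"] None leaf(2) assms(1) by (simp add: leaf_def)
    finally show ?thesis using None by simp
  next
    case (Some q)
    then have "(Some q, 0) \<in> R - {mu}" using x assms(2) by (auto simp: Xh_def reps_def mu_def)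
    then show ?thesis using dist_set_same_cluster[of "R - {mu}" "(Some q, 0)" x h] fin Some by simp
  qed
  then have "cost (Xh h) (ch h) (R - {mu}) \<le> (\<Sum>x\<in>Xh h. if fst x = None then 1 else 0)"
    unfolding cost_def by (rule sum_mono)
  also have "\<dots> = 1" using sum_Xh_fst[where g = "\<lambda>u. if u = None then 1 else 0"] by simp
  also have "\<dots> \<le> cost (Xh h) (ch h) R + fact (level h b) ^ 3"
  proof -
    have "0 \<le> cost (Xh h) (ch h) R" using cost_nonneg[of R "Xh h" h] fin assms(4) by blast
    moreover have "1 \<le> (fact (level h b) ^ 3 :: real)" by (simp add: fact_ge_1 one_le_power)
    ultimately show ?thesis by linarith
  qed
  also have "\<dots> \<le> cost (Xh h) (ch h) (R - {r'})"
    by (rule cost_remove_sole_rep[OF assms(1) R assms(4,5)])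
      (use r' assms(3) in \<open>auto simp: reps_def mu_def\<close>)
  finally show ?thesis .
qed simp

section \<open>The Reverse Greedy execution\<close>

(* Points are deleted in decreasing rank: the duplicate points of the clusters, then mu, then
   the representatives from the leaves up to the root. *)
definition rank :: "nat \<Rightarrow> point \<Rightarrow> nat" where
  "rank h x = (if snd x \<noteq> 0 then h + 2 else case fst x of None \<Rightarrow> h + 1 | Some p \<Rightarrow> length p + 1)"

lemma rank_cases [consumes 1, case_names rep mu dup]:
  assumes "x \<in> Xh h"
  obtains p where "x = (Some p, 0)" "valid_path h p" "rank h x = length p + 1"
  | "x = mu" "rank h x = h + 1"
  | "snd x \<noteq> 0" "rank h x = h + 2"
proof -
  from assms consider p i where "x = (Some p, i)" "valid_path h p" | "x = mu"
    by (auto simp: Xh_def mu_def)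
  then show ?thesis
  proof cases
    case 1
    then show ?thesis using that by (cases i) (auto simp: rank_def)
  qed (use that in \<open>simp add: rank_def mu_def\<close>)
qed

lemma rank_rep: "rank h (Some p, 0) = length p + 1"
  by (simp add: rank_def)

lemma all_reps_subset:
  assumes "h \<ge> 1" and "h < rank h r" and "\<And>x. x \<in> Xh h \<Longrightarrow> rank h x < rank h r \<Longrightarrow> x \<in> R"
  shows "all_reps h \<subseteq> R"
  using assms valid_path_length by (force simp: reps_def rank_rep intro: rep_in_Xh)

lemma rank_prefix_eq_cut:
  assumes h: "h \<ge> 1" and R: "R \<subseteq> Xh h" and "valid_path h a"
    and below: "\<And>x. x \<in> R \<Longrightarrow> rank h x \<le> length a + 1"
    and closed: "\<And>x. x \<in> Xh h \<Longrightarrow> rank h x < length a + 1 \<Longrightarrow> x \<in> R"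
  shows "R = reps (cut_nodes h (level h a)
    {p. valid_path h p \<and> level h p = level h a \<and> (Some p, 0) \<in> R})" (is "R = ?S")
proof
  show "R \<subseteq> ?S"
  proof
    fix x assume x: "x \<in> R"
    then have "x \<in> Xh h" using R by blast
    then show "x \<in> ?S"
      using below[OF x] x valid_path_length[OF assms(3)] h
      by (cases rule: rank_cases) (auto simp: reps_def cut_nodes_def level_def)
  qed
  show "?S \<subseteq> R"
    using closed rep_in_Xh by (auto simp: reps_def cut_nodes_def level_def rank_rep)
qed

lemma greedy_choice:
  assumes h: "h \<ge> 1" and R: "R \<subseteq> Xh h" and "r \<in> R" and "r' \<in> R" and "2 \<le> card R"
    and below: "\<And>x. x \<in> R \<Longrightarrow> rank h x \<le> rank h r"
    and closed: "\<And>x. x \<in> Xh h \<Longrightarrow> rank h x < rank h r \<Longrightarrow> x \<in> R"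
  shows "cost (Xh h) (ch h) (R - {r}) \<le> cost (Xh h) (ch h) (R - {r'})"
proof -
  have ne: "R - {r'} \<noteq> {}"
  proof
    assume "R - {r'} = {}"
    then have "card R \<le> 1" using card_mono[of "{r'}" R] by auto
    with assms(5) show False by simp
  qed
  have "r \<in> Xh h" using assms(2,3) by blast
  then show ?thesis
  proof (cases rule: rank_cases)
    case dup
    have "mu \<in> R" using closed[OF mu_in_Xh] dup by (simp add: rank_def mu_def)
    moreover have "all_reps h \<subseteq> R"
      by (rule all_reps_subset[where r = r, OF h _ closed]) (simp add: dup(2))
    ultimately show ?thesis using greedy_remove_duplicate[OF R _ _ dup(1) ne] by simp
  next
    case mu
    have "R \<subseteq> insert mu (all_reps h)"
    proof
      fix x assume x: "x \<in> R"
      then have "x \<in> Xh h" using R by blast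
      then show "x \<in> insert mu (all_reps h)"
        using below[OF x] mu by (cases rule: rank_cases) (auto simp: reps_def)
    qed
    moreover have "all_reps h \<subseteq> R"
      by (rule all_reps_subset[where r = r, OF h _ closed]) (simp add: mu(2))
    ultimately show ?thesis using greedy_remove_mu[OF h _ _ assms(4) ne] mu by simp
  next
    case (rep a)
    define j where "j = level h a"
    define B where "B = {p. valid_path h p \<and> level h p = j \<and> (Some p, 0) \<in> R}"
    have R_eq: "R = reps (cut_nodes h j B)"
      unfolding j_def B_def using rank_prefix_eq_cut[OF h R rep(2)] below closed rep(3) by simp
    have "j < h"
    proof (rule ccontr)
      assume "\<not> j < h"
      moreover have "p = []" if "\<not> h - length p < h" for p :: "nat list"
        using that h by (cases p) auto
      ultimately have "cut_nodes h j B \<subseteq> {[]}" by (auto simp: cut_nodes_def B_def level_def)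
      then have "R \<subseteq> {rho}" unfolding R_eq by (auto simp: reps_def rho_def)
      then have "card R \<le> 1" using card_mono[of "{rho}" R] by simp
      with assms(5) show False by simp
    qed
    then interpret level_cut h j B
      using rep(2) valid_path_length[OF rep(2)] by unfold_locales (auto simp: j_def level_def B_def)
    have "a \<in> B" using rep assms(3) by (simp add: B_def j_def)
    then show ?thesis using greedy_remove_rep[of a r'] R_eq rep assms(4) by simp
  qed
qed

lemma reverse_greedy_run_to_rho:
  assumes "h \<ge> 1"
  shows "\<exists>R. reverse_greedy_run (Xh h) (ch h) R \<and> R 1 = {rho}"
proof (rule reverse_greedy_run_by_rank[where rank = "rank h"])
  show "rank h rho < rank h x" if "x \<in> Xh h" "x \<noteq> rho" for x
    using that assms by (cases rule: rank_cases) (auto simp: rank_def rho_def)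
qed (use assms finite_Xh rho_in_Xh greedy_choice in auto)

theorem mainTheorem5:
  fixes h :: nat
  assumes "h \<ge> 2"
  shows "card (Xh h) \<le> fact (h + 1) ^ 3
    \<and> (\<exists>R. reverse_greedy_run (Xh h) (ch h) R \<and>
          (\<exists>x. R 1 = {x} \<and> fst x = Some []) \<and>
          cost (Xh h) (ch h) (R 1) / Min ((\<lambda>x. cost (Xh h) (ch h) {x}) ` Xh h)
            \<ge> (real h - 1) / 8)
    \<and> cost (Xh h) (ch h) {mu} < fact (h + 1) ^ 3
    \<and> cost (Xh h) (ch h) {rho} \<ge> (real h - 1) * fact (h + 1) ^ 3 / 8"
proof -
  have h: "h \<ge> 1" using assms by simp
  obtain R where run: "reverse_greedy_run (Xh h) (ch h) R" and R1: "R 1 = {rho}"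
    using reverse_greedy_run_to_rho[OF h] by blast
  let ?opt = "Min ((\<lambda>x. cost (Xh h) (ch h) {x}) ` Xh h)"
  have "0 < ?opt" using cost_singleton_pos[OF h] finite_Xh mu_in_Xh[of h] by (subst Min_gr_iff) auto
  have "?opt \<le> cost (Xh h) (ch h) {mu}" by (rule Min_le) (use finite_Xh mu_in_Xh in auto)
  then have "?opt < fact (h + 1) ^ 3" using cost_mu_lt[OF h] by simp
  have "(real h - 1) / 8 * ?opt \<le> (real h - 1) / 8 * fact (h + 1) ^ 3"
    using \<open>?opt < fact (h + 1) ^ 3\<close> h by (intro mult_left_mono) auto
  also have "\<dots> \<le> cost (Xh h) (ch h) {rho}" using cost_rho_ge[OF assms] by simp
  finally have "(real h - 1) / 8 \<le> cost (Xh h) (ch h) {rho} / ?opt"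
    using \<open>0 < ?opt\<close> by (simp add: pos_le_divide_eq)
  then show ?thesis
    using card_Xh_le[OF h] cost_mu_lt[OF h] cost_rho_ge[OF assms] run R1 by (auto simp: rho_def)
qed

end
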